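(* $Z^*(G)=Z^*(\hat G)$. Moreover, there exists an optimal $\hat G$-r-forest (one attaining $Z^*(\hat G)$) with at most $2r-2$ non-terminal vertices.
   Context: Let $G=(V,E)$ be a connected undirected network with $n$ vertices and edge lengths $c_e>0$. Let $\mathcal R$ be a set of $r\ge2$ relevant pairs (r-pairs) of vertices, with $r$ a fixed constant. A terminal vertex is a vertex belonging to some r-pair. Problem A (general objective) on a network $H$ with vertex set $V$: build edges one at a time at unit speed from time $0$, in some sequence of distinct edges. The connection time of an r-pair $\{u,v\}$ is the earliest time at which $u$ and $v$ are joined by a path of completed edges. The objective $\Phi$ is a non-decreasing function of the connection times of the r-pairs (computable in $O(r)$ time from them), and is to be minimized. It suffices to consider sequences whose edges form a spanning tree of $H$. $\hat G$ is the metric closure of $G$: the complete network on $V$ whose edge $(u,v)$ has length equal to the shortest-path distance in $G$. $Z^*(G)$ and $Z^*(\hat G)$ denote the optimal objective values of Problem A on $G$ and on $\hat G$, respectively, with the same r-pairs and objective. An r-forest in $H$ is a subnetwork that is a forest, joins every r-pair by a path, and each of whose edges lies on the path of some r-pair. For an r-forest, its value is the minimum of $\Phi$ over all orderings of its edges, where the connection time of an r-pair is the completion time of the last-built edge of its path in the forest. A $\hat G$-r-forest is an r-forest in $\hat G$. It is optimal if its value equals $Z^*(\hat G)$. Its non-terminal vertices are its vertices that are not terminal vertices. *)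

theory Defs
  imports Complex_Main
begin

definition network :: "'a set \<Rightarrow> 'a set set \<Rightarrow> ('a set \<Rightarrow> real) \<Rightarrow> bool" where
  "network V E c \<longleftrightarrow> finite V \<and>
     (\<forall>e\<in>E. \<exists>u v. u \<in> V \<and> v \<in> V \<and> u \<noteq> v \<and> e = {u, v}) \<and>
     (\<forall>e\<in>E. c e > 0)"

definition joined :: "'a set set \<Rightarrow> 'a \<Rightarrow> 'a \<Rightarrow> bool" where
  "joined F u v \<longleftrightarrow> (u, v) \<in> {(x, y). {x, y} \<in> F}\<^sup>*"

definition connected_net :: "'a set \<Rightarrow> 'a set set \<Rightarrow> bool" where
  "connected_net V E \<longleftrightarrow> (\<forall>u\<in>V. \<forall>v\<in>V. joined E u v)"

definition is_walk :: "'a set set \<Rightarrow> 'a list \<Rightarrow> bool" where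
  "is_walk E p \<longleftrightarrow> p \<noteq> [] \<and> (\<forall>i. Suc i < length p \<longrightarrow> {p ! i, p ! Suc i} \<in> E)"

definition walk_len :: "('a set \<Rightarrow> real) \<Rightarrow> 'a list \<Rightarrow> real" where
  "walk_len c p = (\<Sum>i<length p - 1. c {p ! i, p ! Suc i})"

definition path_uses :: "'a set set \<Rightarrow> 'a \<Rightarrow> 'a \<Rightarrow> 'a set \<Rightarrow> bool" where
  "path_uses F u v e \<longleftrightarrow> (\<exists>p. is_walk F p \<and> distinct p \<and> hd p = u \<and> last p = v \<and>
      (\<exists>i. Suc i < length p \<and> {p ! i, p ! Suc i} = e))"

text \<open>Metric closure: complete network on V, edge length = shortest-path distance in G.\<close>
definition hat_E :: "'a set \<Rightarrow> 'a set set" where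
  "hat_E V = {{u, v} | u v. u \<in> V \<and> v \<in> V \<and> u \<noteq> v}"

definition hat_c :: "'a set set \<Rightarrow> ('a set \<Rightarrow> real) \<Rightarrow> 'a set \<Rightarrow> real" where
  "hat_c E c e = Inf {walk_len c p | p. is_walk E p \<and> {hd p, last p} = e}"

text \<open>Problem A. A building sequence is a list of distinct edges; edges are built one at a
  time at unit speed from time 0, so after k edges the time is the sum of their lengths.\<close>
definition comp_time :: "('a set \<Rightarrow> real) \<Rightarrow> 'a set list \<Rightarrow> nat \<Rightarrow> real" where
  "comp_time c es k = sum_list (map c (take k es))"

definition conn_time :: "('a set \<Rightarrow> real) \<Rightarrow> 'a set list \<Rightarrow> 'a \<times> 'a \<Rightarrow> real" where
  "conn_time c es uv = comp_time c es (LEAST k. joined (set (take k es)) (fst uv) (snd uv))"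

definition conn_times :: "('a set \<Rightarrow> real) \<Rightarrow> ('a \<times> 'a) list \<Rightarrow> 'a set list \<Rightarrow> real list" where
  "conn_times c R es = map (conn_time c es) R"

definition feasible_seq :: "'a set set \<Rightarrow> ('a \<times> 'a) list \<Rightarrow> 'a set list \<Rightarrow> bool" where
  "feasible_seq E R es \<longleftrightarrow> distinct es \<and> set es \<subseteq> E \<and>
     (\<forall>(u, v)\<in>set R. joined (set es) u v)"

definition Zstar :: "'a set set \<Rightarrow> ('a set \<Rightarrow> real) \<Rightarrow> ('a \<times> 'a) list \<Rightarrow> (real list \<Rightarrow> real) \<Rightarrow> real" where
  "Zstar E c R \<Phi> = Inf ((\<lambda>es. \<Phi> (conn_times c R es)) ` {es. feasible_seq E R es})"

definition forest :: "'a set set \<Rightarrow> bool" where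
  "forest F \<longleftrightarrow> (\<forall>e\<in>F. \<forall>x y. e = {x, y} \<longrightarrow> \<not> joined (F - {e}) x y)"

definition r_forest :: "'a set set \<Rightarrow> ('a \<times> 'a) list \<Rightarrow> 'a set set \<Rightarrow> bool" where
  "r_forest E R F \<longleftrightarrow> F \<subseteq> E \<and> finite F \<and> forest F \<and>
     (\<forall>(u, v)\<in>set R. joined F u v) \<and>
     (\<forall>e\<in>F. \<exists>(u, v)\<in>set R. path_uses F u v e)"

text \<open>Value of a forest: minimum over orderings of its edges. In a forest, the first moment
  u and v are joined by built edges is the completion of the last-built edge of their path.\<close>
definition forest_value :: "('a set \<Rightarrow> real) \<Rightarrow> ('a \<times> 'a) list \<Rightarrow> (real list \<Rightarrow> real) \<Rightarrow> 'a set set \<Rightarrow> real" where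
  "forest_value c R \<Phi> F = Inf ((\<lambda>es. \<Phi> (conn_times c R es)) ` {es. distinct es \<and> set es = F})"

definition terminals :: "('a \<times> 'a) list \<Rightarrow> 'a set" where
  "terminals R = fst ` set R \<union> snd ` set R"

definition non_terminals :: "('a \<times> 'a) list \<Rightarrow> 'a set set \<Rightarrow> 'a set" where
  "non_terminals R F = \<Union>F - terminals R"

definition monotone_obj :: "nat \<Rightarrow> (real list \<Rightarrow> real) \<Rightarrow> bool" where
  "monotone_obj r \<Phi> \<longleftrightarrow> (\<forall>xs ys. length xs = r \<longrightarrow> length ys = r \<longrightarrow>
      list_all2 (\<le>) xs ys \<longrightarrow> \<Phi> xs \<le> \<Phi> ys)"

end

theory Submission
  imports Defs
begin

text \<open>
  Each edge of a schedule for the metric closure can be replaced by the edges of a shortest path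
  of G, skipping edges built before; this delays no connection. Conversely the metric closure
  contains G with edge lengths that are no longer.

  Among the optimal schedules for the metric closure take a shortest one. Each of its edges is
  needed at some moment for some r-pair, since otherwise dropping it would give a shorter
  schedule that is no slower; hence its edges form an r-forest. A non-terminal (Steiner) vertex
  of degree one could be dropped with its edge, and at a Steiner vertex x of degree two the
  edges {x, a} and {x, b} could be replaced by {a, b}, built when the later of the two was,
  which by the triangle inequality is no slower. So Steiner vertices have degree at least three,
  and since a forest has fewer edges than vertices, counting degrees leaves at most
  (number of terminals) - 2 of them.
\<close>

section \<open>Connectivity\<close>

lemma joined_refl [simp]: "joined F u u"
  by (simp add: joined_def)

lemma joined_edge: "{x, y} \<in> F \<Longrightarrow> joined F x y"
  unfolding joined_def by (rule r_into_rtrancl) simp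

lemma joined_trans: "joined F x y \<Longrightarrow> joined F y z \<Longrightarrow> joined F x z"
  unfolding joined_def by (rule rtrancl_trans)

lemma joined_sym: "joined F x y \<Longrightarrow> joined F y x"
proof -
  have "sym {(x, y). {x, y} \<in> F}" by (auto simp: sym_def insert_commute)
  then have "sym ({(x, y). {x, y} \<in> F}\<^sup>*)" by (rule sym_rtrancl)
  then show "joined F x y \<Longrightarrow> joined F y x" unfolding joined_def by (auto dest: symD)
qed

lemma joined_mono: "joined F x y \<Longrightarrow> F \<subseteq> G \<Longrightarrow> joined G x y"
  unfolding joined_def using rtrancl_mono[of "{(x, y). {x, y} \<in> F}" "{(x, y). {x, y} \<in> G}"] by auto

lemma joined_map:
  assumes "\<And>s t. {s, t} \<in> P \<Longrightarrow> joined Q (f s) (f t)" and "joined P u v"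
  shows "joined Q (f u) (f v)"
  using assms(2) unfolding joined_def[of P]
proof (induction rule: rtrancl_induct)
  case (step y z)
  then have "joined Q (f y) (f z)" using assms(1) by simp
  with step.IH show ?case by (rule joined_trans)
qed simp

lemma joined_subst:
  assumes "joined P u v" "\<And>s t. {s, t} \<in> P \<Longrightarrow> joined Q s t"
  shows "joined Q u v"
  using joined_map[where f = id, OF assms(2) assms(1)] by simp

lemma joined_doubleton: "joined F a b \<Longrightarrow> {a, b} = {s, t} \<Longrightarrow> joined F s t"
  by (auto simp: doubleton_eq_iff intro: joined_sym)

lemma joined_insert_cases:
  assumes "joined (insert {x, y} S) a b"
  shows "joined S a b \<or> (joined S a x \<and> joined S y b) \<or> (joined S a y \<and> joined S x b)"
  using assms unfolding joined_def[of "insert _ _"]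
proof (induction rule: rtrancl_induct)
  case (step b z)
  show ?case
  proof (cases "{b, z} \<in> S")
    case True
    with step.IH show ?thesis by (meson joined_edge joined_trans)
  next
    case False
    with step.hyps have "(b = x \<and> z = y) \<or> (b = y \<and> z = x)" by (auto simp: doubleton_eq_iff)
    with step.IH show ?thesis by (meson joined_trans joined_sym joined_refl)
  qed
qed simp

lemma joined_remove_edge:
  assumes "joined P u v" and xy: "joined (P - {{x, y}}) x y"
  shows "joined (P - {{x, y}}) u v"
  using assms(1)
proof (rule joined_subst)
  fix s t assume "{s, t} \<in> P"
  then show "joined (P - {{x, y}}) s t"
    using xy by (cases "{s, t} = {x, y}") (auto simp: doubleton_eq_iff intro: joined_edge joined_sym)
qed

text \<open>Proof: map x to a and every other vertex to itself.\<close>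
lemma joined_contract_vertex:
  assumes "joined P u v" "u \<noteq> x" "v \<noteq> x"
    and keep: "\<And>e. e \<in> P \<Longrightarrow> x \<notin> e \<Longrightarrow> e \<in> Q"
    and nbrs: "\<And>y. {x, y} \<in> P \<Longrightarrow> joined Q a y"
  shows "joined Q u v"
proof -
  define f where "f z = (if z = x then a else z)" for z
  have "joined Q (f u) (f v)"
  proof (rule joined_map[OF _ assms(1)])
    fix s t assume st: "{s, t} \<in> P"
    show "joined Q (f s) (f t)"
    proof (cases "s = x")
      case True
      then show ?thesis
        using st nbrs[of t] by (simp add: f_def)
    next
      case s: False
      show ?thesis
      proof (cases "t = x")
        case True
        then have "joined Q a s" using st nbrs[of s] by (simp add: insert_commute)
        then show ?thesis using s True by (simp add: f_def joined_sym)
      next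
        case False
        then show ?thesis using s st keep[of "{s, t}"] by (simp add: f_def joined_edge)
      qed
    qed
  qed
  then show ?thesis using assms(2,3) by (simp add: f_def)
qed

section \<open>Walks\<close>

lemma is_walk_Nil [simp]: "\<not> is_walk E []"
  by (simp add: is_walk_def)

lemma is_walk_singleton [simp]: "is_walk E [x]"
  by (simp add: is_walk_def)

lemma is_walk_Cons_Cons: "is_walk E (x # y # p) \<longleftrightarrow> {x, y} \<in> E \<and> is_walk E (y # p)"
proof -
  have "(\<forall>i. Suc i < length (x # y # p) \<longrightarrow> {(x # y # p) ! i, (x # y # p) ! Suc i} \<in> E) \<longleftrightarrow>
      (\<forall>i < Suc (length p). {(x # y # p) ! i, (x # y # p) ! Suc i} \<in> E)"
    by auto
  then show ?thesis unfolding is_walk_def All_less_Suc2 by auto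
qed

lemma walk_len_singleton [simp]: "walk_len c [x] = 0"
  by (simp add: walk_len_def)

lemma walk_len_Cons_Cons: "walk_len c (x # y # p) = c {x, y} + walk_len c (y # p)"
  unfolding walk_len_def by (simp only: length_Cons diff_Suc_1 sum.lessThan_Suc_shift) simp

lemma is_walk_append: "is_walk E (xs @ y # ys) \<longleftrightarrow> is_walk E (xs @ [y]) \<and> is_walk E (y # ys)"
  by (induction xs rule: induct_list012) (auto simp: is_walk_Cons_Cons)

lemma walk_len_append: "walk_len c (xs @ y # ys) = walk_len c (xs @ [y]) + walk_len c (y # ys)"
  by (induction xs rule: induct_list012) (auto simp: walk_len_Cons_Cons)

lemma walk_len_nonneg: "is_walk E p \<Longrightarrow> \<forall>e\<in>E. 0 \<le> c e \<Longrightarrow> 0 \<le> walk_len c p"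
  unfolding walk_len_def is_walk_def by (auto intro!: sum_nonneg)

lemma is_walk_mono: "is_walk E p \<Longrightarrow> E \<subseteq> F \<Longrightarrow> is_walk F p"
  unfolding is_walk_def by blast

lemma joined_walk_ends: "is_walk F p \<Longrightarrow> joined F (hd p) (last p)"
  by (induction p rule: induct_list012) (auto simp: is_walk_Cons_Cons intro: joined_trans joined_edge)

lemma walk_rev: "is_walk E p \<Longrightarrow> is_walk E (rev p) \<and> walk_len c (rev p) = walk_len c p"
proof (induction p rule: induct_list012)
  case (3 x y p)
  then have "{x, y} \<in> E" "is_walk E (y # p)" by (simp_all add: is_walk_Cons_Cons)
  with 3 show ?case
    using is_walk_append[of E "rev p" y "[x]"] walk_len_append[of c "rev p" y "[x]"]
    by (simp add: is_walk_Cons_Cons walk_len_Cons_Cons insert_commute)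
qed simp_all

lemma walk_between:
  assumes "is_walk E p" "{hd p, last p} = {s, t}"
  shows "\<exists>q. is_walk E q \<and> hd q = s \<and> last q = t \<and> walk_len c q = walk_len c p"
proof (cases "hd p = s \<and> last p = t")
  case False
  with assms have "hd (rev p) = s \<and> last (rev p) = t"
    by (auto simp: doubleton_eq_iff hd_rev last_rev)
  then show ?thesis using walk_rev[OF assms(1)] by blast
qed (use assms in blast)

lemma joined_imp_walk: "joined F u v \<Longrightarrow> \<exists>p. is_walk F p \<and> hd p = u \<and> last p = v"
  unfolding joined_def
proof (induction rule: rtrancl_induct)
  case base
  show ?case by (intro exI[of _ "[u]"]) simp
next
  case (step y z)
  then obtain p where p: "is_walk F p" "hd p = u" "last p = y" by blast
  then have "p = butlast p @ [y]" by (metis append_butlast_last_id is_walk_Nil)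
  with p step.hyps(2) have "is_walk F (butlast p @ [y, z])"
    using is_walk_append[of F "butlast p" y "[z]"] by (simp add: is_walk_Cons_Cons)
  with p \<open>p = butlast p @ [y]\<close> show ?case
    by (intro exI[of _ "p @ [z]"])
      (metis append.assoc append_Cons append_Nil hd_append2 is_walk_Nil last_snoc)
qed

text \<open>Cutting out the closed subwalk between two visits of a vertex.\<close>
lemma distinct_walk_shorter:
  assumes "is_walk E p" "\<forall>e\<in>E. 0 \<le> c e"
  shows "\<exists>q. is_walk E q \<and> distinct q \<and> hd q = hd p \<and> last q = last p \<and> walk_len c q \<le> walk_len c p"
  using assms(1)
proof (induction "length p" arbitrary: p rule: less_induct)
  case less
  show ?case
  proof (cases "distinct p")
    case False
    then obtain xs ys zs y where p: "p = xs @ y # ys @ y # zs"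
      using not_distinct_decomp by fastforce
    have walks: "is_walk E (xs @ [y])" "is_walk E ((y # ys) @ [y])" "is_walk E (y # zs)"
      using less.prems is_walk_append[of E xs y "ys @ y # zs"] is_walk_append[of E "y # ys" y zs]
      by (simp_all add: p)
    define q where "q = xs @ y # zs"
    have "is_walk E q" using walks is_walk_append[of E xs y zs] by (simp add: q_def)
    moreover have "walk_len c q \<le> walk_len c p"
      using walk_len_nonneg[OF walks(2) assms(2)] walk_len_append[of c xs y zs]
        walk_len_append[of c xs y "ys @ y # zs"] walk_len_append[of c "y # ys" y zs]
      by (simp add: p q_def)
    moreover have "hd q = hd p" "last q = last p" by (simp_all add: q_def p hd_append)
    moreover have "length q < length p" by (simp add: q_def p)
    ultimately show ?thesis using less.hyps by fastforce
  qed (use less.prems in blast)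
qed

lemma path_uses_mono: "path_uses P u v e \<Longrightarrow> P \<subseteq> F \<Longrightarrow> path_uses F u v e"
  unfolding path_uses_def using is_walk_mono by blast

lemma path_uses_if_separating:
  assumes "joined P u v" "\<not> joined (P - {e}) u v"
  shows "path_uses P u v e"
proof -
  obtain p where "is_walk P p" "hd p = u" "last p = v" using joined_imp_walk[OF assms(1)] by blast
  with distinct_walk_shorter[of P p "\<lambda>_. 0"] obtain q where
    q: "is_walk P q" "distinct q" "hd q = u" "last q = v" by auto
  show ?thesis
  proof (rule ccontr)
    assume "\<not> path_uses P u v e"
    with q have "is_walk (P - {e}) q" unfolding path_uses_def is_walk_def by blast
    from joined_walk_ends[OF this] q assms(2) show False by simp
  qed
qed

definition walk_edges :: "'a list \<Rightarrow> 'a set list" where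
  "walk_edges p = map (\<lambda>i. {p ! i, p ! Suc i}) [0..<length p - 1]"

lemma set_walk_edges: "set (walk_edges p) = {{p ! i, p ! Suc i} | i. Suc i < length p}"
  unfolding walk_edges_def by auto

lemma is_walk_walk_edges: "is_walk E p \<Longrightarrow> is_walk (set (walk_edges p)) p"
  unfolding is_walk_def set_walk_edges by blast

lemma walk_edges_subset: "is_walk E p \<Longrightarrow> set (walk_edges p) \<subseteq> E"
  unfolding is_walk_def set_walk_edges by blast

lemma walk_len_eq_sum_list: "walk_len c p = sum_list (map c (walk_edges p))"
  unfolding walk_len_def walk_edges_def
  by (simp add: comp_def interv_sum_list_conv_sum_set_nat lessThan_atLeast0)

section \<open>The metric closure\<close>

lemma doubleton_in_hat_E: "u \<in> V \<Longrightarrow> v \<in> V \<Longrightarrow> u \<noteq> v \<Longrightarrow> {u, v} \<in> hat_E V"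
  unfolding hat_E_def by blast

lemma card_hat_E_edge: "e \<in> hat_E V \<Longrightarrow> card e = 2"
  unfolding hat_E_def by auto

lemma finite_hat_E: "finite V \<Longrightarrow> finite (hat_E V)"
  by (rule finite_subset[of _ "Pow V"]) (auto simp: hat_E_def)

lemma network_edgeE:
  assumes "network V E c" "e \<in> E"
  obtains u v where "u \<in> V" "v \<in> V" "u \<noteq> v" "e = {u, v}"
  using assms unfolding network_def by meson

lemma network_edge_subset: "network V E c \<Longrightarrow> e \<in> E \<Longrightarrow> e \<subseteq> V"
  by (erule network_edgeE) auto

lemma network_subset_hat_E: "network V E c \<Longrightarrow> E \<subseteq> hat_E V"
  by (metis doubleton_in_hat_E network_edgeE subsetI)

lemma network_nonneg: "network V E c \<Longrightarrow> \<forall>e\<in>E. 0 \<le> c e"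
  unfolding network_def by (simp add: less_imp_le)

lemma network_finite_hat_E: "network V E c \<Longrightarrow> finite (hat_E V)"
  unfolding network_def by (simp add: finite_hat_E)

lemma network_finite_edges: "network V E c \<Longrightarrow> finite E"
  by (rule rev_finite_subset[OF network_finite_hat_E network_subset_hat_E])

lemma network_walk_vertices:
  assumes "network V E c" "is_walk E p" "2 \<le> length p"
  shows "set p \<subseteq> V"
proof
  fix x assume "x \<in> set p"
  then obtain i where i: "i < length p" "x = p ! i" by (auto simp: in_set_conv_nth)
  define j where "j = (if Suc i < length p then i else i - 1)"
  have "Suc j < length p" "x \<in> {p ! j, p ! Suc j}"
    using i assms(3) by (auto simp: j_def)
  moreover have "{p ! j, p ! Suc j} \<in> E" using assms(2) \<open>Suc j < length p\<close> unfolding is_walk_def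
    by blast
  ultimately show "x \<in> V" using network_edge_subset[OF assms(1)] by blast
qed

text \<open>Only finitely many walks are distinct, and every walk can be shortened to a distinct one.\<close>
lemma shortest_walk_exists:
  assumes net: "network V E c" and con: "connected_net V E" and e: "e \<in> hat_E V"
  shows "\<exists>p. is_walk E p \<and> {hd p, last p} = e \<and>
    (\<forall>q. is_walk E q \<longrightarrow> {hd q, last q} = e \<longrightarrow> walk_len c p \<le> walk_len c q)"
proof -
  obtain u v where uv: "u \<in> V" "v \<in> V" "u \<noteq> v" "e = {u, v}" using e unfolding hat_E_def by blast
  define D where "D = {p. is_walk E p \<and> distinct p \<and> {hd p, last p} = e}"
  have "D \<subseteq> {xs. set xs \<subseteq> V \<and> distinct xs}"
  proof safe
    fix p x assume "p \<in> D" "x \<in> set p"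
    then have "is_walk E p" "hd p \<noteq> last p" using uv by (auto simp: D_def doubleton_eq_iff)
    then have "2 \<le> length p" by (cases p; cases "tl p") auto
    with \<open>is_walk E p\<close> \<open>x \<in> set p\<close> show "x \<in> V" using network_walk_vertices[OF net] by blast
  qed (simp add: D_def)
  moreover have "finite V" using net unfolding network_def by blast
  ultimately have "finite D" by (rule finite_subset[OF _ finite_subset_distinct])
  have shorter: "\<exists>q\<in>D. walk_len c q \<le> walk_len c w" if w: "is_walk E w" "{hd w, last w} = e" for w
  proof -
    obtain q where q: "is_walk E q" "distinct q" "hd q = hd w" "last q = last w"
      and "walk_len c q \<le> walk_len c w"
      using distinct_walk_shorter[OF w(1) network_nonneg[OF net]] by blast
    moreover have "q \<in> D" using q w(2) unfolding D_def by simp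
    ultimately show ?thesis by blast
  qed
  have "joined E u v" using con uv(1,2) unfolding connected_net_def by simp
  then obtain p0 where "is_walk E p0" "hd p0 = u" "last p0 = v"
    using joined_imp_walk by metis
  then have "D \<noteq> {}" using uv shorter[of p0] by auto
  then have "Min (walk_len c ` D) \<in> walk_len c ` D" using \<open>finite D\<close> by (intro Min_in) auto
  then obtain p where p: "p \<in> D" "walk_len c p = Min (walk_len c ` D)" by (metis imageE)
  have "walk_len c p \<le> walk_len c q" if "is_walk E q" "{hd q, last q} = e" for q
    using shorter[OF that] p(2) \<open>finite D\<close> by (metis Min_le finite_imageI image_eqI order_trans)
  with p(1) show ?thesis unfolding D_def by blast
qed

lemma hat_c_eq_shortest:
  assumes "is_walk E p" "{hd p, last p} = e"
    and "\<And>q. is_walk E q \<Longrightarrow> {hd q, last q} = e \<Longrightarrow> walk_len c p \<le> walk_len c q"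
  shows "hat_c E c e = walk_len c p"
  unfolding hat_c_def by (rule cInf_eq_minimum) (use assms in auto)

lemma hat_c_attained:
  assumes "network V E c" "connected_net V E" "e \<in> hat_E V"
  shows "\<exists>p. is_walk E p \<and> {hd p, last p} = e \<and> hat_c E c e = walk_len c p"
proof -
  obtain p where p: "is_walk E p" "{hd p, last p} = e"
    and least: "\<forall>q. is_walk E q \<longrightarrow> {hd q, last q} = e \<longrightarrow> walk_len c p \<le> walk_len c q"
    using shortest_walk_exists[OF assms] by blast
  have "hat_c E c e = walk_len c p" by (rule hat_c_eq_shortest[OF p]) (rule least[rule_format])
  with p show ?thesis by blast
qed

lemma hat_c_le_walk_len:
  assumes "network V E c" "connected_net V E" "is_walk E q" "{hd q, last q} \<in> hat_E V"
  shows "hat_c E c {hd q, last q} \<le> walk_len c q"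
proof -
  obtain p where p: "is_walk E p" "{hd p, last p} = {hd q, last q}"
    and least: "\<forall>q'. is_walk E q' \<longrightarrow> {hd q', last q'} = {hd q, last q} \<longrightarrow> walk_len c p \<le> walk_len c q'"
    using shortest_walk_exists[OF assms(1,2,4)] by blast
  have "hat_c E c {hd q, last q} = walk_len c p"
    by (rule hat_c_eq_shortest[OF p]) (rule least[rule_format])
  moreover have "walk_len c p \<le> walk_len c q" using least assms(3) by simp
  ultimately show ?thesis by simp
qed

lemma hat_c_nonneg:
  assumes "network V E c" "connected_net V E" "e \<in> hat_E V"
  shows "0 \<le> hat_c E c e"
proof -
  obtain p where "is_walk E p" "hat_c E c e = walk_len c p"
    using hat_c_attained[OF assms] by blast
  then show ?thesis using walk_len_nonneg network_nonneg[OF assms(1)] by simp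
qed

lemma hat_c_le:
  assumes net: "network V E c" and con: "connected_net V E" and e: "e \<in> E"
  shows "hat_c E c e \<le> c e"
proof -
  obtain u v where uv: "e = {u, v}" using network_edgeE[OF net e] by blast
  have "is_walk E [u, v]" using e uv by (simp add: is_walk_Cons_Cons)
  moreover have "e \<in> hat_E V" using network_subset_hat_E[OF net] e by blast
  ultimately have "hat_c E c {hd [u, v], last [u, v]} \<le> walk_len c [u, v]"
    using uv by (intro hat_c_le_walk_len[OF net con]) simp_all
  then show ?thesis unfolding uv by (simp add: walk_len_Cons_Cons)
qed

lemma hat_c_walk_between:
  assumes "network V E c" "connected_net V E" "{s, t} \<in> hat_E V"
  obtains p where "is_walk E p" "hd p = s" "last p = t" "hat_c E c {s, t} = walk_len c p"
proof -
  obtain p where p: "is_walk E p" "{hd p, last p} = {s, t}" "hat_c E c {s, t} = walk_len c p"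
    using hat_c_attained[OF assms] by blast
  obtain q where "is_walk E q" "hd q = s" "last q = t" "walk_len c q = walk_len c p"
    using walk_between[OF p(1,2), of c] by blast
  with p(3) show thesis by (intro that[of q]) simp_all
qed

lemma hat_c_triangle:
  assumes net: "network V E c" and con: "connected_net V E"
    and "{a, x} \<in> hat_E V" "{x, b} \<in> hat_E V" "{a, b} \<in> hat_E V"
  shows "hat_c E c {a, b} \<le> hat_c E c {a, x} + hat_c E c {x, b}"
proof -
  obtain p1 where p1: "is_walk E p1" "hd p1 = a" "last p1 = x" "hat_c E c {a, x} = walk_len c p1"
    using hat_c_walk_between[OF net con assms(3)] by blast
  obtain p2 where p2: "is_walk E p2" "hd p2 = x" "last p2 = b" "hat_c E c {x, b} = walk_len c p2"
    using hat_c_walk_between[OF net con assms(4)] by blast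
  obtain q2 where q2: "p2 = x # q2" using p2(1,2) by (cases p2) auto
  obtain q1 where q1: "p1 = q1 @ [x]" using p1(1,3) by (cases p1 rule: rev_exhaust) auto
  define p where "p = q1 @ x # q2"
  have "is_walk E p" using is_walk_append[of E q1 x q2] p1(1) p2(1) by (simp add: p_def q1 q2)
  moreover have "walk_len c p = walk_len c p1 + walk_len c p2"
    using walk_len_append[of c q1 x q2] by (simp add: p_def q1 q2)
  moreover have "hd p = a" using p1(2) by (cases q1) (simp_all add: p_def q1)
  moreover have "last p = b" using p2(3) by (simp add: p_def q2)
  ultimately show ?thesis
    using hat_c_le_walk_len[OF net con \<open>is_walk E p\<close>] assms(5) p1(4) p2(4) by simp
qed

section \<open>Schedules\<close>

lemma comp_time_eq_sum: "distinct es \<Longrightarrow> comp_time c es k = sum c (set (take k es))"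
  unfolding comp_time_def by (simp add: sum_list_distinct_conv_sum_set)

lemma conn_time_attained:
  assumes "joined (set es) u v"
  obtains k where "joined (set (take k es)) u v" "conn_time c es (u, v) = comp_time c es k"
proof -
  have "joined (set (take (length es) es)) u v" using assms by simp
  then have "joined (set (take (LEAST k. joined (set (take k es)) u v) es)) u v" by (rule LeastI)
  then show thesis using that unfolding conn_time_def by simp
qed

lemma conn_time_le:
  assumes "distinct es" "\<forall>e\<in>set es. 0 \<le> c e" "joined (set (take k es)) u v"
  shows "conn_time c es (u, v) \<le> comp_time c es k"
proof -
  define k0 where "k0 = (LEAST k. joined (set (take k es)) u v)"
  have "k0 \<le> k" unfolding k0_def using assms(3) by (rule Least_le)
  then have sub: "set (take k0 es) \<subseteq> set (take k es)" by (rule set_take_subset_set_take)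
  have nonneg: "\<forall>e\<in>set (take k es). 0 \<le> c e" using assms(2) by (meson in_set_takeD)
  have "sum c (set (take k0 es)) \<le> sum c (set (take k es))"
    by (rule sum_mono2[OF finite_set sub]) (use nonneg in blast)
  moreover have "conn_time c es (u, v) = comp_time c es k0" unfolding conn_time_def k0_def by simp
  ultimately show ?thesis using assms(1) by (simp add: comp_time_eq_sum)
qed

definition keeps_pace ::
    "('a \<times> 'a) list \<Rightarrow> ('a set \<Rightarrow> real) \<Rightarrow> 'a set list \<Rightarrow> ('a set \<Rightarrow> real) \<Rightarrow> 'a set list \<Rightarrow> bool" where
  "keeps_pace R c' es' c es \<longleftrightarrow> (\<forall>k. \<exists>k'. comp_time c' es' k' \<le> comp_time c es k \<and>
     (\<forall>(u, v)\<in>set R. joined (set (take k es)) u v \<longrightarrow> joined (set (take k' es')) u v))"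

lemma keeps_pace_objective_le:
  assumes mono: "monotone_obj (length R) \<Phi>" and feas: "feasible_seq A R es"
    and es': "distinct es'" "set es' \<subseteq> A'" and nonneg: "\<forall>e\<in>A'. 0 \<le> c' e"
    and pace: "keeps_pace R c' es' c es"
  shows "feasible_seq A' R es'" "\<Phi> (conn_times c' R es') \<le> \<Phi> (conn_times c R es)"
proof -
  have faster: "joined (set es') u v \<and> conn_time c' es' (u, v) \<le> conn_time c es (u, v)"
    if uv: "(u, v) \<in> set R" for u v
  proof -
    have "joined (set es) u v" using feas uv unfolding feasible_seq_def by auto
    then obtain k where k: "joined (set (take k es)) u v" "conn_time c es (u, v) = comp_time c es k"
      by (rule conn_time_attained)
    obtain k' where k': "comp_time c' es' k' \<le> comp_time c es k"
      and "\<forall>(u, v)\<in>set R. joined (set (take k es)) u v \<longrightarrow> joined (set (take k' es')) u v"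
      using pace unfolding keeps_pace_def by blast
    then have "joined (set (take k' es')) u v" using k(1) uv by auto
    moreover have "\<forall>e\<in>set es'. 0 \<le> c' e" using es'(2) nonneg by auto
    ultimately have "conn_time c' es' (u, v) \<le> comp_time c' es' k'"
      using es'(1) by (intro conn_time_le) auto
    moreover have "joined (set es') u v"
      using \<open>joined (set (take k' es')) u v\<close> set_take_subset by (rule joined_mono)
    ultimately show ?thesis using k(2) k'(1) by simp
  qed
  then show "feasible_seq A' R es'" using es' unfolding feasible_seq_def by blast
  have "conn_time c' es' z \<le> conn_time c es z" if "z \<in> set R" for z
    using faster[of "fst z" "snd z"] that by simp
  then have "list_all2 (\<le>) (conn_times c' R es') (conn_times c R es)"
    unfolding conn_times_def list_all2_map1 list_all2_map2 by (rule list.rel_refl_strong)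
  then show "\<Phi> (conn_times c' R es') \<le> \<Phi> (conn_times c R es)"
    using mono unfolding monotone_obj_def by (simp add: conn_times_def)
qed

text \<open>Unlike \<open>remdups\<close>, which keeps last occurrences, \<open>nub\<close> keeps first occurrences and
  therefore commutes with taking prefixes; S holds the elements already seen.\<close>
fun nub :: "'b set \<Rightarrow> 'b list \<Rightarrow> 'b list" where
  "nub S [] = []"
| "nub S (x # xs) = (if x \<in> S then nub S xs else x # nub (insert x S) xs)"

lemma nub_append: "nub S (xs @ ys) = nub S xs @ nub (S \<union> set xs) ys"
  by (induction xs arbitrary: S) (auto simp: insert_absorb)

lemma set_nub: "set (nub S xs) = set xs - S"
  by (induction xs arbitrary: S) auto

lemma distinct_nub: "distinct (nub S xs)"
  by (induction xs arbitrary: S) (auto simp: set_nub)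

lemma length_nub_le: "length (nub S xs) \<le> length xs"
  by (induction xs arbitrary: S) (auto simp: le_SucI)

lemma sum_set_le_sum_list: "\<forall>x\<in>set xs. 0 \<le> c x \<Longrightarrow> sum c (set xs) \<le> sum_list (map c xs)"
  for c :: "'b \<Rightarrow> real"
  by (induction xs) (auto simp: sum.insert_if add_increasing)

lemma sum_list_map_concat:
  "sum_list (map c (concat xss)) = sum_list (map (\<lambda>xs. sum_list (map c xs)) xss)"
  by (induction xss) auto

lemma keeps_pace_substitute:
  assumes join: "\<And>k u v. (u, v) \<in> set R \<Longrightarrow> joined (set (take k es)) u v \<Longrightarrow>
      joined (set (concat (map W (take k es)))) u v"
    and cost: "\<And>k. sum c' (set (concat (map W (take k es)))) \<le> comp_time c es k"
  shows "keeps_pace R c' (nub {} (concat (map W es))) c es"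
  unfolding keeps_pace_def
proof
  fix k
  let ?es' = "nub {} (concat (map W es))" and ?pre = "concat (map W (take k es))"
  have "?es' = nub {} ?pre @ nub (set ?pre) (concat (map W (drop k es)))"
    by (metis Un_empty_left append_take_drop_id concat_append map_append nub_append)
  then have "take (length (nub {} ?pre)) ?es' = nub {} ?pre" by simp
  then have "set (take (length (nub {} ?pre)) ?es') = set ?pre" by (simp add: set_nub)
  moreover have
    "comp_time c' ?es' (length (nub {} ?pre)) = sum c' (set (take (length (nub {} ?pre)) ?es'))"
    by (rule comp_time_eq_sum[OF distinct_nub])
  ultimately show "\<exists>k'. comp_time c' ?es' k' \<le> comp_time c es k \<and>
      (\<forall>(u, v)\<in>set R. joined (set (take k es)) u v \<longrightarrow> joined (set (take k' ?es')) u v)"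
    using join cost by (intro exI[of _ "length (nub {} ?pre)"]) auto
qed

lemma finite_feasible_seqs: "finite A \<Longrightarrow> finite {es. feasible_seq A R es}"
  by (rule finite_subset[OF _ finite_subset_distinct[of A]]) (auto simp: feasible_seq_def)

lemma Zstar_le:
  assumes "finite A" "feasible_seq A R es"
  shows "Zstar A c R \<Phi> \<le> \<Phi> (conn_times c R es)"
  unfolding Zstar_def using assms finite_feasible_seqs by (intro cInf_lower bdd_below_finite) auto

lemma Zstar_greatest:
  assumes "feasible_seq A R es0" "\<And>es. feasible_seq A R es \<Longrightarrow> z \<le> \<Phi> (conn_times c R es)"
  shows "z \<le> Zstar A c R \<Phi>"
  unfolding Zstar_def using assms by (intro cInf_greatest) auto

lemma Zstar_attained:
  assumes "finite A" "feasible_seq A R es0"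
  obtains es where "feasible_seq A R es" "\<Phi> (conn_times c R es) = Zstar A c R \<Phi>"
proof -
  let ?X = "(\<lambda>es. \<Phi> (conn_times c R es)) ` {es. feasible_seq A R es}"
  have X: "finite ?X" "?X \<noteq> {}" using finite_feasible_seqs[OF assms(1)] assms(2) by auto
  have "Zstar A c R \<Phi> = Min ?X" unfolding Zstar_def using X by (rule cInf_eq_Min)
  moreover have "Min ?X \<in> ?X" using X by (rule Min_in)
  ultimately obtain es where "feasible_seq A R es" "\<Phi> (conn_times c R es) = Zstar A c R \<Phi>"
    by auto
  then show thesis by (rule that)
qed

lemma feasible_seq_mono: "feasible_seq A R es \<Longrightarrow> A \<subseteq> A' \<Longrightarrow> feasible_seq A' R es"
  unfolding feasible_seq_def by blast

lemma network_feasible_seq: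
  assumes net: "network V E c" and "connected_net V E" and "\<forall>(u, v)\<in>set R. u \<in> V \<and> v \<in> V"
  shows "\<exists>es. feasible_seq E R es"
proof -
  obtain es where es: "set es = E" "distinct es"
    using finite_distinct_list[OF network_finite_edges[OF net]] by blast
  have "joined (set es) u v" if "(u, v) \<in> set R" for u v
    using assms(2,3) that es(1) unfolding connected_net_def by auto
  with es show ?thesis unfolding feasible_seq_def by auto
qed

lemma mem_set_take_linear:
  "(\<forall>k. b \<in> set (take k xs) \<longrightarrow> a \<in> set (take k xs)) \<or> (\<forall>k. a \<in> set (take k xs) \<longrightarrow> b \<in> set (take k xs))"
  by (metis nat_le_linear set_take_subset_set_take subsetD)

lemma sum_replace_pair_le:
  fixes c :: "'b \<Rightarrow> real"
  assumes "finite P" "\<And>f. f \<in> P \<Longrightarrow> 0 \<le> c f" "0 \<le> c h" "f1 \<noteq> f2"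
    and "f2 \<in> P \<Longrightarrow> f1 \<in> P" "c h \<le> c f1 + c f2"
  shows "sum c ((\<lambda>f. if f = f2 then h else f) ` (P - {f1})) \<le> sum c P"
proof -
  define g where "g f = (if f = f2 then h else f)" for f
  have "sum c (g ` (P - {f1})) \<le> sum (c \<circ> g) (P - {f1})"
    by (rule sum_image_le) (use assms(1-3) in \<open>auto simp: g_def\<close>)
  also have "\<dots> \<le> sum c P"
  proof (cases "f2 \<in> P")
    case True
    let ?Q = "P - {f1} - {f2}"
    have "sum (c \<circ> g) ?Q = sum c ?Q" by (rule sum.cong) (auto simp: g_def)
    moreover have "sum (c \<circ> g) (P - {f1}) = c h + sum (c \<circ> g) ?Q"
      using True assms(1,4) by (subst sum.remove[of _ f2]) (auto simp: g_def)
    moreover have "sum c P = c f1 + c f2 + sum c ?Q"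
      using True assms(1,4,5) by (simp add: sum.remove[of P f1] sum.remove[of "P - {f1}" f2])
    ultimately show ?thesis using assms(6) by simp
  next
    case False
    then have "sum (c \<circ> g) (P - {f1}) = sum c (P - {f1})" by (intro sum.cong) (auto simp: g_def)
    also have "\<dots> \<le> sum c P" using assms(1,2) by (intro sum_mono2) auto
    finally show ?thesis .
  qed
  finally show ?thesis unfolding g_def .
qed

lemma keeps_pace_expand_walks:
  assumes walks: "\<And>f. f \<in> set hs \<Longrightarrow>
      is_walk E (W f) \<and> {hd (W f), last (W f)} = f \<and> c' f = walk_len c (W f)"
    and nonneg: "\<forall>e\<in>E. 0 \<le> c e"
  shows "keeps_pace R c (nub {} (concat (map (walk_edges \<circ> W) hs))) c' hs"
proof (rule keeps_pace_substitute)
  fix k u v assume "joined (set (take k hs)) u v"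
  then show "joined (set (concat (map (walk_edges \<circ> W) (take k hs)))) u v"
  proof (rule joined_subst)
    fix s t assume st: "{s, t} \<in> set (take k hs)"
    then have "{s, t} \<in> set hs" by (rule in_set_takeD)
    then have "is_walk E (W {s, t})" "{hd (W {s, t}), last (W {s, t})} = {s, t}"
      using walks by blast+
    then have "joined (set (walk_edges (W {s, t}))) s t"
      using joined_walk_ends[OF is_walk_walk_edges] joined_doubleton by metis
    then show "joined (set (concat (map (walk_edges \<circ> W) (take k hs)))) s t"
      by (rule joined_mono) (use st in auto)
  qed
next
  fix k
  have "sum c (set (concat (map (walk_edges \<circ> W) (take k hs))))
      \<le> sum_list (map c (concat (map (walk_edges \<circ> W) (take k hs))))"
    using walks walk_edges_subset nonneg by (intro sum_set_le_sum_list) (fastforce dest: in_set_takeD)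
  also have "\<dots> = sum_list (map (\<lambda>f. walk_len c (W f)) (take k hs))"
    by (simp add: sum_list_map_concat walk_len_eq_sum_list comp_def)
  also have "\<dots> = comp_time c' hs k"
    unfolding comp_time_def using walks by (metis (no_types, lifting) in_set_takeD map_eq_conv)
  finally show "sum c (set (concat (map (walk_edges \<circ> W) (take k hs)))) \<le> comp_time c' hs k" .
qed

section \<open>Optimal values in G and in its metric closure\<close>

lemma hat_feasible_seq:
  assumes "network V E c" "connected_net V E" "\<forall>(u, v)\<in>set R. u \<in> V \<and> v \<in> V"
  shows "\<exists>es. feasible_seq (hat_E V) R es"
  using network_feasible_seq[OF assms] feasible_seq_mono network_subset_hat_E[OF assms(1)] by blast

lemma Zstar_hat_le_Zstar:
  assumes net: "network V E c" and con: "connected_net V E"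
    and pairs: "\<forall>(u, v)\<in>set R. u \<in> V \<and> v \<in> V" and mono: "monotone_obj (length R) \<Phi>"
  shows "Zstar (hat_E V) (hat_c E c) R \<Phi> \<le> Zstar E c R \<Phi>"
proof -
  have finite: "finite (hat_E V)" using net by (rule network_finite_hat_E)
  have sub: "E \<subseteq> hat_E V" using net by (rule network_subset_hat_E)
  obtain es0 where "feasible_seq E R es0" using network_feasible_seq[OF assms(1-3)] by blast
  then show ?thesis
  proof (rule Zstar_greatest)
    fix es assume es: "feasible_seq E R es"
    have "comp_time (hat_c E c) es k \<le> comp_time c es k" for k
      unfolding comp_time_def using es hat_c_le[OF net con]
      by (intro sum_list_mono) (auto simp: feasible_seq_def dest: in_set_takeD)
    then have "keeps_pace R (hat_c E c) es c es" unfolding keeps_pace_def by blast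
    then have "\<Phi> (conn_times (hat_c E c) R es) \<le> \<Phi> (conn_times c R es)"
      using keeps_pace_objective_le(2)[OF mono es] es sub hat_c_nonneg[OF net con]
      unfolding feasible_seq_def by blast
    moreover have "feasible_seq (hat_E V) R es" using es sub by (rule feasible_seq_mono)
    ultimately show "Zstar (hat_E V) (hat_c E c) R \<Phi> \<le> \<Phi> (conn_times c R es)"
      using Zstar_le[OF finite] by (meson order_trans)
  qed
qed

lemma Zstar_le_Zstar_hat:
  assumes net: "network V E c" and con: "connected_net V E"
    and pairs: "\<forall>(u, v)\<in>set R. u \<in> V \<and> v \<in> V" and mono: "monotone_obj (length R) \<Phi>"
  shows "Zstar E c R \<Phi> \<le> Zstar (hat_E V) (hat_c E c) R \<Phi>"
proof -
  have finite: "finite (hat_E V)" using net by (rule network_finite_hat_E)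
  have "finite E" using net by (rule network_finite_edges)
  obtain es0 where "feasible_seq (hat_E V) R es0" using hat_feasible_seq[OF assms(1-3)] by blast
  with finite obtain hs where hs: "feasible_seq (hat_E V) R hs"
    "\<Phi> (conn_times (hat_c E c) R hs) = Zstar (hat_E V) (hat_c E c) R \<Phi>"
    by (rule Zstar_attained)
  have "\<forall>f\<in>hat_E V. \<exists>p. is_walk E p \<and> {hd p, last p} = f \<and> hat_c E c f = walk_len c p"
    using hat_c_attained[OF net con] by blast
  then obtain W where W: "\<And>f. f \<in> hat_E V \<Longrightarrow>
      is_walk E (W f) \<and> {hd (W f), last (W f)} = f \<and> hat_c E c f = walk_len c (W f)"
    by metis
  have hs_W: "is_walk E (W f)" "{hd (W f), last (W f)} = f" "hat_c E c f = walk_len c (W f)"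
    if "f \<in> set hs" for f
    using W that hs(1) unfolding feasible_seq_def by blast+
  define es where "es = nub {} (concat (map (walk_edges \<circ> W) hs))"
  have pace: "keeps_pace R c es (hat_c E c) hs"
    unfolding es_def using hs_W network_nonneg[OF net] by (intro keeps_pace_expand_walks) auto
  have subset: "set es \<subseteq> E"
  proof
    fix e assume "e \<in> set es"
    then obtain f where "f \<in> set hs" "e \<in> set (walk_edges (W f))" unfolding es_def set_nub by auto
    then show "e \<in> E" using walk_edges_subset[OF hs_W(1)] by blast
  qed
  have "distinct es" unfolding es_def by (rule distinct_nub)
  note keeps_pace_objective_le[OF mono hs(1) this subset network_nonneg[OF net] pace]
  then show ?thesis using Zstar_le[OF \<open>finite E\<close>, of R es c \<Phi>] hs(2) by linarith
qed

section \<open>Forests\<close>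

lemma doubleton_with_elem: "card e = 2 \<Longrightarrow> x \<in> e \<Longrightarrow> \<exists>y. y \<noteq> x \<and> e = {x, y}"
  by (auto simp: card_2_iff)

lemma forest_edge_not_joined: "forest F \<Longrightarrow> {x, y} \<in> F \<Longrightarrow> \<not> joined (F - {{x, y}}) x y"
  unfolding forest_def by blast

lemma forest_subset:
  assumes "forest F" "G \<subseteq> F"
  shows "forest G"
  unfolding forest_def
proof (intro ballI allI impI notI)
  fix e x y assume "e \<in> G" "e = {x, y}" "joined (G - {e}) x y"
  then have "joined (F - {{x, y}}) x y" using assms(2) joined_mono by (metis Diff_mono order_refl)
  moreover have "{x, y} \<in> F" using \<open>e \<in> G\<close> \<open>e = {x, y}\<close> assms(2) by blast
  then have "\<not> joined (F - {{x, y}}) x y" by (rule forest_edge_not_joined[OF assms(1)])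
  ultimately show False by contradiction
qed

lemma forest_insert:
  assumes forest: "forest F" and not_joined: "\<not> joined F x y"
  shows "forest (insert {x, y} F)"
  unfolding forest_def
proof (intro ballI allI impI notI)
  fix e a b assume e: "e \<in> insert {x, y} F" "e = {a, b}" and ab: "joined (insert {x, y} F - {e}) a b"
  show False
  proof (cases "e = {x, y}")
    case True
    have "{x, y} \<notin> F" using not_joined by (auto intro: joined_edge)
    with True ab have "joined F a b" by simp
    moreover have "{a, b} = {x, y}" using True e(2) by simp
    ultimately have "joined F x y" by (rule joined_doubleton)
    with not_joined show False ..
  next
    case False
    let ?F' = "F - {e}"
    have "e \<in> F" using False e(1) by simp
    have "insert {x, y} F - {e} = insert {x, y} ?F'" using False by blast
    with ab have cases: "joined ?F' a b \<or> (joined ?F' a x \<and> joined ?F' y b) \<or>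
        (joined ?F' a y \<and> joined ?F' x b)"
      by (simp add: joined_insert_cases)
    have "\<not> joined ?F' a b" using forest_edge_not_joined[OF forest] \<open>e \<in> F\<close> e(2) by simp
    with cases have "joined ?F' x a \<and> joined ?F' b y \<or> joined ?F' x b \<and> joined ?F' a y"
      by (auto intro: joined_sym)
    moreover have "joined ?F' s t \<Longrightarrow> joined F s t" for s t by (erule joined_mono) blast
    moreover have "joined F a b" "joined F b a" using \<open>e \<in> F\<close> e(2)
      by (auto intro: joined_edge joined_sym)
    ultimately have "joined F x y" by (metis joined_trans)
    with not_joined show False ..
  qed
qed

lemma forest_of_sequence:
  assumes "\<forall>e\<in>set es. \<exists>x y. e = {x, y}"
    and "\<And>xs x y ys. es = xs @ {x, y} # ys \<Longrightarrow> \<not> joined (set xs) x y"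
  shows "forest (set es)"
  using assms
proof (induction es rule: rev_induct)
  case Nil
  show ?case unfolding forest_def by simp
next
  case (snoc e es)
  obtain x y where e: "e = {x, y}" using snoc.prems(1) by auto
  have "forest (set es)" using snoc.prems by (intro snoc.IH) auto
  moreover have "\<not> joined (set es) x y" using snoc.prems(2)[of es x y "[]"] e by simp
  ultimately show ?case using forest_insert e by simp
qed

lemma finite_Union_card_2: "finite F \<Longrightarrow> \<forall>e\<in>F. card e = 2 \<Longrightarrow> finite (\<Union>F)"
  by (intro finite_Union) (auto intro: card_ge_0_finite)

definition degree :: "'a set set \<Rightarrow> 'a \<Rightarrow> nat" where
  "degree F v = card {e \<in> F. v \<in> e}"

lemma sum_degree:
  assumes "finite F" "\<forall>e\<in>F. card e = 2"
  shows "(\<Sum>v\<in>\<Union>F. degree F v) = 2 * card F"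
proof -
  have "finite (\<Union>F)" using assms by (rule finite_Union_card_2)
  have "(\<Sum>v\<in>\<Union>F. degree F v) = (\<Sum>v\<in>\<Union>F. \<Sum>e\<in>F. if v \<in> e then 1 else 0)"
    unfolding degree_def using assms(1) by (simp add: sum.If_cases Collect_conj_eq Int_commute)
  also have "\<dots> = (\<Sum>e\<in>F. \<Sum>v\<in>\<Union>F. if v \<in> e then 1 else 0)" by (rule sum.swap)
  also have "\<dots> = (\<Sum>e\<in>F. card e)"
    using \<open>finite (\<Union>F)\<close> by (intro sum.cong) (auto simp: sum.If_cases Int_absorb1 Union_upper)
  also have "\<dots> = 2 * card F" using assms(2) by simp
  finally show ?thesis .
qed

lemma forest_split_at_edge:
  assumes forest: "forest F" and xy: "{x, y} \<in> F" and pairs: "\<forall>e\<in>F. card e = 2"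
  obtains F1 F2 where "F1 \<union> F2 = F - {{x, y}}" "F1 \<inter> F2 = {}"
    and "insert x (\<Union>F1) \<inter> insert y (\<Union>F2) = {}"
proof -
  define F0 where "F0 = F - {{x, y}}"
  define C where "C = {z. joined F0 x z}"
  define F1 where "F1 = {e \<in> F0. e \<subseteq> C}"
  have closed: "e \<in> F1" if "e \<in> F0" "z \<in> e" "z \<in> C" for e z
  proof -
    have "card e = 2" using pairs that(1) by (simp add: F0_def)
    then obtain s t where st: "e = {s, t}" by (auto simp: card_2_iff)
    then have "joined F0 s t" using that(1) by (simp add: joined_edge)
    moreover have "joined F0 x z" "z = s \<or> z = t" using that(2,3) st by (simp_all add: C_def)
    ultimately have "joined F0 x s" "joined F0 x t"
      using joined_trans[of F0 x] joined_sym[of F0 s t] by auto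
    then show ?thesis using that(1) st by (simp add: F1_def C_def)
  qed
  have "F1 \<subseteq> F0" by (simp add: F1_def)
  have outside: "z \<notin> C" if "e \<in> F0 - F1" "z \<in> e" for e z using closed[of e z] that by auto
  have "y \<notin> C" using forest_edge_not_joined[OF forest xy] by (simp add: C_def F0_def)
  then have "insert y (\<Union>(F0 - F1)) \<subseteq> - C" using outside by auto
  moreover have "insert x (\<Union>F1) \<subseteq> C" by (auto simp: C_def F1_def)
  ultimately have "insert x (\<Union>F1) \<inter> insert y (\<Union>(F0 - F1)) = {}"
    by (metis Int_mono Compl_disjoint subset_empty)
  moreover have "F1 \<union> (F0 - F1) = F - {{x, y}}"
    using \<open>F1 \<subseteq> F0\<close> by (simp add: Un_absorb1 F0_def)
  moreover have "F1 \<inter> (F0 - F1) = {}" by blast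
  ultimately show thesis by (rule that[rotated -1])
qed

lemma forest_card_less:
  assumes "finite F" "forest F" "\<forall>e\<in>F. card e = 2"
  shows "card F < card (insert w (\<Union>F))"
  using assms
proof (induction "card F" arbitrary: F w rule: less_induct)
  case less
  note finite = less.prems(1) and forest = less.prems(2) and pairs = less.prems(3)
  have finite_union: "finite (\<Union>F)" using finite pairs by (rule finite_Union_card_2)
  show ?case
  proof (cases "F = {}")
    case False
    then obtain e0 where "e0 \<in> F" by blast
    moreover from this have "card e0 = 2" using pairs by simp
    then obtain x y where "e0 = {x, y}" by (auto simp: card_2_iff)
    ultimately have xy: "{x, y} \<in> F" by simp
    obtain F1 F2 where split: "F1 \<union> F2 = F - {{x, y}}" "F1 \<inter> F2 = {}"
      and disjoint: "insert x (\<Union>F1) \<inter> insert y (\<Union>F2) = {}"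
      using forest_split_at_edge[OF forest xy pairs] by blast
    have sub: "F1 \<subseteq> F - {{x, y}}" "F2 \<subseteq> F - {{x, y}}"
      using Un_upper1[of F1 F2] Un_upper2[of F2 F1] unfolding split(1) by simp_all
    have smaller: "card G < card (insert v (\<Union>G))" if "G \<subseteq> F - {{x, y}}" for G v
    proof (rule less.hyps)
      have "G \<subset> F" using that xy by auto
      with finite show "card G < card F" by (rule psubset_card_mono)
      show "finite G" using \<open>G \<subset> F\<close> finite by (auto intro: rev_finite_subset)
      show "forest G" using \<open>G \<subset> F\<close> forest by (auto intro: forest_subset)
      show "\<forall>e\<in>G. card e = 2" using \<open>G \<subset> F\<close> pairs by auto
    qed
    have "finite F1" "finite F2" using finite sub by (auto intro: rev_finite_subset)
    have U: "insert x (\<Union>F1) \<subseteq> \<Union>F" "insert y (\<Union>F2) \<subseteq> \<Union>F" using xy sub by auto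
    have "0 < card F" using finite xy by (auto simp: card_gt_0_iff)
    then have "card F = card (F - {{x, y}}) + 1" using card_Diff_singleton[OF xy] by simp
    also have "card (F - {{x, y}}) = card F1 + card F2"
      unfolding split(1)[symmetric] by (rule card_Un_disjoint[OF \<open>finite F1\<close> \<open>finite F2\<close> split(2)])
    also have "card F1 + card F2 + 1 < card (insert x (\<Union>F1)) + card (insert y (\<Union>F2))"
      using smaller[OF sub(1), of x] smaller[OF sub(2), of y] by linarith
    also have "\<dots> = card (insert x (\<Union>F1) \<union> insert y (\<Union>F2))"
      using finite_subset[OF U(1) finite_union] finite_subset[OF U(2) finite_union] disjoint
      by (rule card_Un_disjoint[symmetric])
    also have "\<dots> \<le> card (insert w (\<Union>F))"
      using finite_union U by (intro card_mono) auto
    finally show ?thesis .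
  qed simp
qed

lemma forest_steiner_bound:
  assumes "finite F" "forest F" "\<forall>e\<in>F. card e = 2" "F \<noteq> {}"
    and branching: "\<And>v. v \<in> \<Union>F \<Longrightarrow> v \<notin> T \<Longrightarrow> 3 \<le> degree F v"
  shows "card (\<Union>F - T) + 2 \<le> card (\<Union>F \<inter> T)"
proof -
  have finite_union: "finite (\<Union>F)" using assms(1,3) by (rule finite_Union_card_2)
  obtain w where "w \<in> \<Union>F" using assms(3,4) by (metis Union_iff card_2_iff all_not_in_conv insertI1)
  then have "card F < card (\<Union>F)" using forest_card_less[OF assms(1-3), of w]
    by (simp add: insert_absorb)
  have "degree F v \<ge> (if v \<in> T then 1 else 3)" if "v \<in> \<Union>F" for v
  proof -
    have "{e \<in> F. v \<in> e} \<noteq> {}" using that by blast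
    then have "1 \<le> degree F v" unfolding degree_def using assms(1)
      by (simp add: Suc_le_eq card_gt_0_iff)
    then show ?thesis using branching that by auto
  qed
  then have "(\<Sum>v\<in>\<Union>F. if v \<in> T then 1 else 3) \<le> 2 * card F"
    using sum_degree[OF assms(1,3)] sum_mono[of "\<Union>F" "\<lambda>v. if v \<in> T then 1 else 3" "degree F"] by simp
  moreover have "(\<Sum>v\<in>\<Union>F. if v \<in> T then 1 else 3::nat) = card (\<Union>F \<inter> T) + 3 * card (\<Union>F - T)"
    using finite_union by (simp add: sum.If_cases Diff_eq)
  moreover have "card (\<Union>F) = card (\<Union>F \<inter> T) + card (\<Union>F - T)"
    using finite_union by (rule card_Int_Diff)
  ultimately show ?thesis using \<open>card F < card (\<Union>F)\<close> by linarith
qed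

section \<open>Shortest optimal schedules\<close>

lemma terminals_pair: "(u, v) \<in> set R \<Longrightarrow> u \<in> terminals R \<and> v \<in> terminals R"
  unfolding terminals_def by force

lemma card_terminals_le: "card (terminals R) \<le> 2 * length R"
proof -
  have "card (terminals R) \<le> card (fst ` set R) + card (snd ` set R)"
    unfolding terminals_def by (rule card_Un_le)
  also have "\<dots> \<le> 2 * length R"
    using card_image_le[of "set R" fst] card_image_le[of "set R" snd] card_length[of R] by simp
  finally show ?thesis .
qed

definition shortcut_closed :: "'a set set \<Rightarrow> ('a set \<Rightarrow> real) \<Rightarrow> bool" where
  "shortcut_closed A c \<longleftrightarrow> (\<forall>x a b. {x, a} \<in> A \<longrightarrow> {x, b} \<in> A \<longrightarrow> a \<noteq> b \<longrightarrow>
     {a, b} \<in> A \<and> c {a, b} \<le> c {x, a} + c {x, b})"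

lemma shortest_optimal_schedule_exists:
  assumes "finite A" "feasible_seq A R es0"
  obtains es where "feasible_seq A R es" "\<Phi> (conn_times c R es) = Zstar A c R \<Phi>"
    and "\<And>es'. feasible_seq A R es' \<Longrightarrow> \<Phi> (conn_times c R es') \<le> \<Phi> (conn_times c R es) \<Longrightarrow>
      length es \<le> length es'"
proof -
  define Opt where "Opt = {es. feasible_seq A R es \<and> \<Phi> (conn_times c R es) = Zstar A c R \<Phi>}"
  obtain es1 where "es1 \<in> Opt" using Zstar_attained[OF assms] unfolding Opt_def by blast
  then obtain es where es: "es \<in> Opt" and least: "\<And>es'. es' \<in> Opt \<Longrightarrow> length es \<le> length es'"
    using ex_has_least_nat[of "\<lambda>es. es \<in> Opt" es1 length] by blast
  show thesis
  proof (rule that)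
    fix es' assume "feasible_seq A R es'" "\<Phi> (conn_times c R es') \<le> \<Phi> (conn_times c R es)"
    moreover have "Zstar A c R \<Phi> \<le> \<Phi> (conn_times c R es')"
      by (rule Zstar_le[OF assms(1) calculation(1)])
    ultimately have "es' \<in> Opt" using es unfolding Opt_def by auto
    then show "length es \<le> length es'" by (rule least)
  qed (use es in \<open>simp_all add: Opt_def\<close>)
qed

lemma forest_value_of_optimal:
  assumes "finite A" "feasible_seq A R es" "\<Phi> (conn_times c R es) = Zstar A c R \<Phi>"
  shows "forest_value c R \<Phi> (set es) = Zstar A c R \<Phi>"
  unfolding forest_value_def
proof (rule cInf_eq_minimum)
  show "Zstar A c R \<Phi> \<in> (\<lambda>es. \<Phi> (conn_times c R es)) ` {es'. distinct es' \<and> set es' = set es}"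
    using assms(2,3) unfolding feasible_seq_def by force
next
  fix z assume "z \<in> (\<lambda>es. \<Phi> (conn_times c R es)) ` {es'. distinct es' \<and> set es' = set es}"
  then obtain es' where "distinct es'" "set es' = set es" "z = \<Phi> (conn_times c R es')" by blast
  moreover from this have "feasible_seq A R es'" using assms(2) unfolding feasible_seq_def by simp
  ultimately show "Zstar A c R \<Phi> \<le> z" using Zstar_le[OF assms(1)] by simp
qed

locale shortest_schedule =
  fixes A :: "'a set set" and c :: "'a set \<Rightarrow> real" and R :: "('a \<times> 'a) list"
    and \<Phi> :: "real list \<Rightarrow> real" and es :: "'a set list"
  assumes monotone: "monotone_obj (length R) \<Phi>"
    and edge_card: "\<And>e. e \<in> A \<Longrightarrow> card e = 2"
    and nonneg: "\<And>e. e \<in> A \<Longrightarrow> 0 \<le> c e"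
    and feasible: "feasible_seq A R es"
    and shortest: "\<And>es'. feasible_seq A R es' \<Longrightarrow> \<Phi> (conn_times c R es') \<le> \<Phi> (conn_times c R es) \<Longrightarrow>
      length es \<le> length es'"
begin

lemma distinct_schedule: "distinct es" and edges_subset: "set es \<subseteq> A"
  using feasible unfolding feasible_seq_def by auto

lemma no_cheaper_replacement:
  assumes e: "e \<in> set es" and g: "g ` (set es - {e}) \<subseteq> A"
    and join: "\<And>k u v. (u, v) \<in> set R \<Longrightarrow> joined (set (take k es)) u v \<Longrightarrow>
      joined (g ` (set (take k es) - {e})) u v"
    and cost: "\<And>k. sum c (g ` (set (take k es) - {e})) \<le> sum c (set (take k es))"
  shows False
proof -
  define W where "W f = (if f = e then [] else [g f])" for f
  have set_W: "set (concat (map W xs)) = g ` (set xs - {e})" for xs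
    by (induction xs) (auto simp: W_def)
  have length_W: "length (concat (map W xs)) = length (filter (\<lambda>f. f \<noteq> e) xs)" for xs
    by (induction xs) (auto simp: W_def)
  define es' where "es' = nub {} (concat (map W es))"
  have pace: "keeps_pace R c es' c es"
    unfolding es'_def
    by (rule keeps_pace_substitute)
      (unfold set_W, simp_all add: join cost comp_time_eq_sum[OF distinct_schedule])
  have "distinct es'" "set es' \<subseteq> A" using g unfolding es'_def set_nub set_W
    by (simp_all add: distinct_nub)
  moreover have "\<forall>e\<in>A. 0 \<le> c e" using nonneg by blast
  ultimately have "length es \<le> length es'"
    using keeps_pace_objective_le[OF monotone feasible _ _ _ pace] shortest by blast
  moreover have "length es' < length es"
    using length_nub_le[of "{}" "concat (map W es)"] length_filter_less[of e es "\<lambda>f. f \<noteq> e"] e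
    by (simp add: es'_def length_W)
  ultimately show False by simp
qed

lemma edge_essential:
  assumes "e \<in> set es"
  shows "\<exists>k u v. (u, v) \<in> set R \<and> joined (set (take k es)) u v \<and> \<not> joined (set (take k es) - {e}) u v"
proof (rule ccontr)
  assume "\<not> ?thesis"
  then have join: "joined (id ` (set (take k es) - {e})) u v"
    if "(u, v) \<in> set R" "joined (set (take k es)) u v" for k u v
    using that by auto
  have "sum c (set (take k es) - {e}) \<le> sum c (set (take k es))" for k
    using edges_subset nonneg by (intro sum_mono2) (auto dest: in_set_takeD)
  with assms edges_subset join show False by (intro no_cheaper_replacement[of e id]) auto
qed

lemma not_joined_before:
  assumes es: "es = xs @ {x, y} # ys"
  shows "\<not> joined (set xs) x y"
proof
  assume xy: "joined (set xs) x y"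
  obtain k u v where uv: "(u, v) \<in> set R" "joined (set (take k es)) u v"
    and cut: "\<not> joined (set (take k es) - {{x, y}}) u v"
    using edge_essential[of "{x, y}"] es by auto
  have "{x, y} \<notin> set xs" using distinct_schedule es by simp
  have "{x, y} \<in> set (take k es)" using uv(2) cut by (metis Diff_empty Diff_insert0)
  then have "length xs < k" using \<open>{x, y} \<notin> set xs\<close> es
    by (cases "k \<le> length xs") (auto dest: in_set_takeD)
  then have "set xs \<subseteq> set (take k es) - {{x, y}}" using \<open>{x, y} \<notin> set xs\<close> es by auto
  with xy have "joined (set (take k es) - {{x, y}}) x y" by (rule joined_mono)
  with cut show False using joined_remove_edge[OF uv(2)] by simp
qed

lemma forest_edges: "forest (set es)"
proof (rule forest_of_sequence)
  show "\<forall>e\<in>set es. \<exists>x y. e = {x, y}"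
  proof
    fix e assume "e \<in> set es"
    then have "card e = 2" using edges_subset edge_card by blast
    then show "\<exists>x y. e = {x, y}" by (auto simp: card_2_iff)
  qed
qed (rule not_joined_before)

lemma edge_on_pair_path:
  assumes "e \<in> set es"
  shows "\<exists>(u, v)\<in>set R. path_uses (set es) u v e"
proof -
  obtain k u v where uv: "(u, v) \<in> set R" "joined (set (take k es)) u v"
    "\<not> joined (set (take k es) - {e}) u v"
    using edge_essential[OF assms] by blast
  have "path_uses (set es) u v e"
    using path_uses_if_separating[OF uv(2,3)] set_take_subset by (rule path_uses_mono)
  with uv(1) show ?thesis by blast
qed

lemma r_forest_edges: "r_forest A R (set es)"
  unfolding r_forest_def using edges_subset forest_edges edge_on_pair_path feasible
  unfolding feasible_seq_def by blast

lemma no_pendant_steiner_point: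
  assumes "x \<notin> terminals R"
  shows "degree (set es) x \<noteq> 1"
proof
  assume "degree (set es) x = 1"
  then obtain e where only: "{f \<in> set es. x \<in> f} = {e}" unfolding degree_def
    by (rule card_1_singletonE)
  then have e: "e \<in> set es" "x \<in> e" by auto
  have "card e = 2" using edge_card edges_subset e(1) by auto
  then obtain y where y: "y \<noteq> x" "e = {x, y}" using doubleton_with_elem[OF _ e(2)] by blast
  obtain k u v where uv: "(u, v) \<in> set R" "joined (set (take k es)) u v"
    and cut: "\<not> joined (set (take k es) - {e}) u v"
    using edge_essential[OF e(1)] by blast
  have "joined (set (take k es) - {e}) u v"
  proof (rule joined_contract_vertex[OF uv(2)])
    show "u \<noteq> x" "v \<noteq> x" using terminals_pair[OF uv(1)] assms by auto
    show "f \<in> set (take k es) - {e}" if "f \<in> set (take k es)" "x \<notin> f" for f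
      using that e(2) by auto
    show "joined (set (take k es) - {e}) y z" if "{x, z} \<in> set (take k es)" for z
    proof -
      have "{x, z} \<in> {f \<in> set es. x \<in> f}" using in_set_takeD[OF that] by simp
      then have "z = y" using only y by (simp add: doubleton_eq_iff)
      then show ?thesis by simp
    qed
  qed
  with cut show False ..
qed

text \<open>Two edges {x, a}, {x, b} at a Steiner point x, with {x, a} built first, can be replaced
  by the single edge {a, b}, built when {x, b} was.\<close>
lemma shortcut_impossible:
  assumes "x \<notin> terminals R" and xa: "{x, a} \<in> set es" and xb: "{x, b} \<in> set es" and "a \<noteq> b"
    and ab: "{a, b} \<in> A" "c {a, b} \<le> c {x, a} + c {x, b}"
    and only: "\<And>f. f \<in> set es \<Longrightarrow> x \<in> f \<Longrightarrow> f = {x, a} \<or> f = {x, b}"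
    and before: "\<And>k. {x, b} \<in> set (take k es) \<Longrightarrow> {x, a} \<in> set (take k es)"
  shows False
proof -
  define g where "g f = (if f = {x, b} then {a, b} else f)" for f
  have "x \<noteq> a" using edge_card xa edges_subset by fastforce
  have "{x, b} \<noteq> {x, a}" using \<open>a \<noteq> b\<close> by (auto simp: doubleton_eq_iff)
  show False
  proof (rule no_cheaper_replacement[OF xa])
    show "g ` (set es - {{x, a}}) \<subseteq> A" using edges_subset ab(1) by (auto simp: g_def)
  next
    fix k u v assume uv: "(u, v) \<in> set R" "joined (set (take k es)) u v"
    let ?P = "set (take k es)"
    show "joined (g ` (?P - {{x, a}})) u v"
    proof (rule joined_contract_vertex[OF uv(2)])
      show "u \<noteq> x" "v \<noteq> x" using terminals_pair[OF uv(1)] assms(1) by auto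
      show "f \<in> g ` (?P - {{x, a}})" if "f \<in> ?P" "x \<notin> f" for f
        using that by (auto simp: g_def image_iff)
      show "joined (g ` (?P - {{x, a}})) a y" if "{x, y} \<in> ?P" for y
      proof -
        have "{x, y} = {x, a} \<or> {x, y} = {x, b}" using only that by (auto dest: in_set_takeD)
        moreover have "{a, b} \<in> g ` (?P - {{x, a}})" if "{x, b} \<in> ?P"
          using that \<open>{x, b} \<noteq> {x, a}\<close> by (auto simp: g_def image_iff)
        ultimately show ?thesis using that \<open>x \<noteq> a\<close>
          by (auto simp: doubleton_eq_iff intro: joined_edge)
      qed
    qed
  next
    fix k
    show "sum c (g ` (set (take k es) - {{x, a}})) \<le> sum c (set (take k es))"
      unfolding g_def
    proof (rule sum_replace_pair_le)
      show "f \<in> set (take k es) \<Longrightarrow> 0 \<le> c f" for f using edges_subset nonneg by (auto dest: in_set_takeD)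
    qed (use ab nonneg \<open>{x, b} \<noteq> {x, a}\<close> before in auto)
  qed
qed

lemma no_steiner_point_of_degree_2:
  assumes shortcut: "shortcut_closed A c" and x: "x \<notin> terminals R"
  shows "degree (set es) x \<noteq> 2"
proof
  assume "degree (set es) x = 2"
  then obtain f1 f2 where D: "{f \<in> set es. x \<in> f} = {f1, f2}" "f1 \<noteq> f2"
    unfolding degree_def by (auto simp: card_2_iff)
  then have "f1 \<in> set es" "x \<in> f1" "f2 \<in> set es" "x \<in> f2" by auto
  moreover have "card f1 = 2" "card f2 = 2" using \<open>f1 \<in> set es\<close> \<open>f2 \<in> set es\<close> edges_subset edge_card
    by auto
  ultimately obtain a b where f1: "f1 = {x, a}" and f2: "f2 = {x, b}"
    using doubleton_with_elem[of f1 x] doubleton_with_elem[of f2 x] by blast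
  have "a \<noteq> b" using D(2) f1 f2 by auto
  have only: "f = {x, a} \<or> f = {x, b}" if "f \<in> set es" "x \<in> f" for f
    using D(1) that f1 f2 by auto
  have "{x, a} \<in> A" "{x, b} \<in> A" using \<open>f1 \<in> set es\<close> \<open>f2 \<in> set es\<close> edges_subset f1 f2 by auto
  then have ab: "{a, b} \<in> A" "c {a, b} \<le> c {x, a} + c {x, b}"
    using shortcut \<open>a \<noteq> b\<close> unfolding shortcut_closed_def by blast+
  from mem_set_take_linear[of f2 es f1] show False
  proof
    assume "\<forall>k. f2 \<in> set (take k es) \<longrightarrow> f1 \<in> set (take k es)"
    then show False
      using shortcut_impossible[OF x _ _ \<open>a \<noteq> b\<close> ab only] \<open>f1 \<in> set es\<close> \<open>f2 \<in> set es\<close> f1 f2 by blast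
  next
    assume "\<forall>k. f1 \<in> set (take k es) \<longrightarrow> f2 \<in> set (take k es)"
    moreover have "{b, a} \<in> A" "c {b, a} \<le> c {x, b} + c {x, a}" using ab
      by (simp_all add: insert_commute)
    ultimately show False
      using shortcut_impossible[of x b a] x \<open>a \<noteq> b\<close> only \<open>f1 \<in> set es\<close> \<open>f2 \<in> set es\<close> f1 f2 by blast
  qed
qed

lemma steiner_point_degree:
  assumes "shortcut_closed A c" "x \<in> \<Union>(set es)" "x \<notin> terminals R"
  shows "3 \<le> degree (set es) x"
proof -
  have "degree (set es) x \<noteq> 0" using assms(2) unfolding degree_def by auto
  moreover have "degree (set es) x \<noteq> 1" using assms(3) by (rule no_pendant_steiner_point)
  moreover have "degree (set es) x \<noteq> 2" using assms(1,3) by (rule no_steiner_point_of_degree_2)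
  ultimately show ?thesis by linarith
qed

lemma card_non_terminals_le:
  assumes "shortcut_closed A c"
  shows "card (non_terminals R (set es)) \<le> 2 * length R - 2"
proof (cases "set es = {}")
  case False
  have "card (\<Union>(set es) - terminals R) + 2 \<le> card (\<Union>(set es) \<inter> terminals R)"
    using edges_subset edge_card steiner_point_degree[OF assms] False
    by (intro forest_steiner_bound[OF finite_set forest_edges]) auto
  moreover have "card (\<Union>(set es) \<inter> terminals R) \<le> card (terminals R)"
    by (rule card_mono) (auto simp: terminals_def)
  ultimately show ?thesis using card_terminals_le[of R] unfolding non_terminals_def by linarith
qed (simp add: non_terminals_def)

end

lemma shortcut_closed_hat:
  assumes net: "network V E c" and con: "connected_net V E"
  shows "shortcut_closed (hat_E V) (hat_c E c)"
  unfolding shortcut_closed_def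
proof (intro allI impI)
  fix x a b assume xa: "{x, a} \<in> hat_E V" and xb: "{x, b} \<in> hat_E V" and "a \<noteq> b"
  have "x \<in> V" "a \<in> V" "b \<in> V" using xa xb unfolding hat_E_def by (auto simp: doubleton_eq_iff)
  then have ab: "{a, b} \<in> hat_E V" using \<open>a \<noteq> b\<close> by (simp add: doubleton_in_hat_E)
  have "{a, x} \<in> hat_E V" using xa by (simp add: insert_commute)
  from hat_c_triangle[OF net con this xb ab] ab
  show "{a, b} \<in> hat_E V \<and> hat_c E c {a, b} \<le> hat_c E c {x, a} + hat_c E c {x, b}"
    by (simp add: insert_commute)
qed

theorem corollary2:
  fixes V :: "'a set" and E :: "'a set set" and c :: "'a set \<Rightarrow> real"
    and R :: "('a \<times> 'a) list" and r :: nat and \<Phi> :: "real list \<Rightarrow> real"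
  assumes "network V E c"
    and "connected_net V E"
    and "length R = r" and "r \<ge> 2"
    and "\<forall>(u, v)\<in>set R. u \<in> V \<and> v \<in> V \<and> u \<noteq> v"
    and "monotone_obj r \<Phi>"
  shows "Zstar E c R \<Phi> = Zstar (hat_E V) (hat_c E c) R \<Phi> \<and>
    (\<exists>F. r_forest (hat_E V) R F \<and>
         forest_value (hat_c E c) R \<Phi> F = Zstar (hat_E V) (hat_c E c) R \<Phi> \<and>
         card (non_terminals R F) \<le> 2 * r - 2)"
proof -
  have pairs: "\<forall>(u, v)\<in>set R. u \<in> V \<and> v \<in> V" and mono: "monotone_obj (length R) \<Phi>"
    using assms(3,5,6) by auto
  have finite: "finite (hat_E V)" using assms(1) by (rule network_finite_hat_E)
  obtain es0 where "feasible_seq (hat_E V) R es0" using hat_feasible_seq[OF assms(1,2) pairs] by blast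
  with finite obtain es where es: "feasible_seq (hat_E V) R es"
      "\<Phi> (conn_times (hat_c E c) R es) = Zstar (hat_E V) (hat_c E c) R \<Phi>"
    and shortest: "\<And>es'. feasible_seq (hat_E V) R es' \<Longrightarrow>
      \<Phi> (conn_times (hat_c E c) R es') \<le> \<Phi> (conn_times (hat_c E c) R es) \<Longrightarrow> length es \<le> length es'"
    by (rule shortest_optimal_schedule_exists[where c = "hat_c E c" and \<Phi> = \<Phi>]) blast
  interpret shortest_schedule "hat_E V" "hat_c E c" R \<Phi> es
    using mono card_hat_E_edge hat_c_nonneg[OF assms(1,2)] es(1) shortest by unfold_locales blast+
  have "card (non_terminals R (set es)) \<le> 2 * r - 2"
    using card_non_terminals_le[OF shortcut_closed_hat[OF assms(1,2)]] assms(3) by simp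
  moreover have "Zstar E c R \<Phi> = Zstar (hat_E V) (hat_c E c) R \<Phi>"
    using Zstar_hat_le_Zstar[OF assms(1,2) pairs mono] Zstar_le_Zstar_hat[OF assms(1,2) pairs mono]
      by simp
  ultimately show ?thesis using r_forest_edges forest_value_of_optimal[OF finite es] by blast
qed

end
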